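(* In a non-degenerate RiFle assignment game, for every stable payoff $(\bar u,\bar v)$ there is exactly one matching $\mu$ such that $(\bar u,\bar v;\mu)$ is a stable outcome.
   Context: A RiFle assignment game consists of two disjoint sets of agents $P=\{p_1,\dots,p_n\}$ and $Q=\{q_1,\dots,q_n\}$, a pair of nonnegative real numbers $(\beta_{ij},\gamma_{ij})$ for every pair $(p_i,q_j)\in P\times Q$ (write $\alpha_{ij}=\beta_{ij}+\gamma_{ij}$), and a designation of every agent as rigid or flexible. Let $\mathcal R$ be the set of pairs with at least one rigid agent and $\mathcal F$ the set of pairs with both agents flexible. An outcome $(\bar u,\bar v;\mu)$ consists of a matching $\mu$ between $P$ and $Q$ (write $p_i\stackrel{\mu}{\longleftrightarrow} q_j$) and payoff vectors $\bar u,\bar v\in\mathbb R^n$. It is feasible if: (1) $u_i\ge0$, $v_j\ge0$; (2) if a rigid $p_i$ is matched to $q_j$ then $u_i=\beta_{ij}$ and, if $q_j$ is flexible, $v_j\ge\gamma_{ij}$; symmetrically for a rigid $q_j$ matched to $p_i$: $v_j=\gamma_{ij}$ and, if $p_i$ is flexible, $u_i\ge\beta_{ij}$; (3) $\sum_iu_i+\sum_jv_j=\sum_{p_i\stackrel{\mu}{\longleftrightarrow}q_j}\alpha_{ij}$. It is stable if feasible and $u_i+v_j\ge\alpha_{ij}$ for $(p_i,q_j)\in\mathcal F$ and ($u_i\ge\beta_{ij}$ or $v_j\ge\gamma_{ij}$) for $(p_i,q_j)\in\mathcal R$. A payoff $(\bar u,\bar v)$ is stable if $(\bar u,\bar v;\mu)$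 is a stable outcome for some matching $\mu$. Reservation prices are modeled by rigid dummy agents; for the following definition an agent left unmatched by a matching is regarded as matched to a rigid dummy agent (whose prescribed share for him is his reservation price). Given a coalition $C\subseteq P\cup Q$ and a matching $\mu$, the total payoff to $C$ under $\mu$ is forced if every pair matched under $\mu$ with one agent in $C$ and the other outside $C$ contains a rigid agent; the forced payoff is then $\sum_{p_i\in C,\ p_i\stackrel{\mu}{\longleftrightarrow}q_j}\beta_{ij}+\sum_{q_j\in C,\ p_i\stackrel{\mu}{\longleftrightarrow}q_j}\gamma_{ij}$. The game is non-degenerate if for any two matchings $\mu,\mu'$: whenever $C$ is a minimal coalition such that the payoff to $C$ is forced under both $\mu$ and $\mu'$, and the two forced payoffs are equal, then $\mu$ and $\mu'$ coincide on $C$. *)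

theory Defs
  imports Complex_Main
begin

text \<open>Agents p_0..p_(n-1) and q_0..q_(n-1) are indexed by {..<n}.
  beta i j, gamma i j are the shares of (p_i,q_j); rp i / rq j say whether p_i / q_j is rigid.
  A matching is a perfect matching between P and Q, represented by its set of pairs (i,j),
  meaning p_i is matched to q_j.\<close>

definition perfect_matching :: "nat \<Rightarrow> (nat \<times> nat) set \<Rightarrow> bool" where
  "perfect_matching n M \<longleftrightarrow> M \<subseteq> {..<n} \<times> {..<n}
     \<and> (\<forall>i<n. \<exists>!j. (i, j) \<in> M) \<and> (\<forall>j<n. \<exists>!i. (i, j) \<in> M)"

definition rifle_game :: "nat \<Rightarrow> (nat \<Rightarrow> nat \<Rightarrow> real) \<Rightarrow> (nat \<Rightarrow> nat \<Rightarrow> real) \<Rightarrow> bool" where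
  "rifle_game n beta gamma \<longleftrightarrow> (\<forall>i<n. \<forall>j<n. 0 \<le> beta i j \<and> 0 \<le> gamma i j)"

definition feasible_outcome ::
  "nat \<Rightarrow> (nat \<Rightarrow> nat \<Rightarrow> real) \<Rightarrow> (nat \<Rightarrow> nat \<Rightarrow> real) \<Rightarrow> (nat \<Rightarrow> bool) \<Rightarrow> (nat \<Rightarrow> bool)
   \<Rightarrow> (nat \<Rightarrow> real) \<Rightarrow> (nat \<Rightarrow> real) \<Rightarrow> (nat \<times> nat) set \<Rightarrow> bool" where
  "feasible_outcome n beta gamma rp rq u v M \<longleftrightarrow>
     perfect_matching n M
     \<and> (\<forall>i<n. 0 \<le> u i) \<and> (\<forall>j<n. 0 \<le> v j)
     \<and> (\<forall>(i, j) \<in> M. rp i \<longrightarrow> u i = beta i j \<and> (\<not> rq j \<longrightarrow> v j \<ge> gamma i j))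
     \<and> (\<forall>(i, j) \<in> M. rq j \<longrightarrow> v j = gamma i j \<and> (\<not> rp i \<longrightarrow> u i \<ge> beta i j))
     \<and> (\<Sum>i<n. u i) + (\<Sum>j<n. v j) = (\<Sum>(i, j) \<in> M. beta i j + gamma i j)"

definition stable_outcome ::
  "nat \<Rightarrow> (nat \<Rightarrow> nat \<Rightarrow> real) \<Rightarrow> (nat \<Rightarrow> nat \<Rightarrow> real) \<Rightarrow> (nat \<Rightarrow> bool) \<Rightarrow> (nat \<Rightarrow> bool)
   \<Rightarrow> (nat \<Rightarrow> real) \<Rightarrow> (nat \<Rightarrow> real) \<Rightarrow> (nat \<times> nat) set \<Rightarrow> bool" where
  "stable_outcome n beta gamma rp rq u v M \<longleftrightarrow>
     feasible_outcome n beta gamma rp rq u v M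
     \<and> (\<forall>i<n. \<forall>j<n. (\<not> rp i \<and> \<not> rq j \<longrightarrow> u i + v j \<ge> beta i j + gamma i j)
                   \<and> ((rp i \<or> rq j) \<longrightarrow> u i \<ge> beta i j \<or> v j \<ge> gamma i j))"

definition stable_payoff ::
  "nat \<Rightarrow> (nat \<Rightarrow> nat \<Rightarrow> real) \<Rightarrow> (nat \<Rightarrow> nat \<Rightarrow> real) \<Rightarrow> (nat \<Rightarrow> bool) \<Rightarrow> (nat \<Rightarrow> bool)
   \<Rightarrow> (nat \<Rightarrow> real) \<Rightarrow> (nat \<Rightarrow> real) \<Rightarrow> bool" where
  "stable_payoff n beta gamma rp rq u v \<longleftrightarrow> (\<exists>M. stable_outcome n beta gamma rp rq u v M)"

definition payoff_forced ::
  "(nat \<Rightarrow> bool) \<Rightarrow> (nat \<Rightarrow> bool) \<Rightarrow> (nat \<times> nat) set \<Rightarrow> nat set \<Rightarrow> nat set \<Rightarrow> bool" where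
  "payoff_forced rp rq M CP CQ \<longleftrightarrow>
     (\<forall>(i, j) \<in> M. ((i \<in> CP) \<noteq> (j \<in> CQ)) \<longrightarrow> rp i \<or> rq j)"

definition forced_payoff ::
  "(nat \<Rightarrow> nat \<Rightarrow> real) \<Rightarrow> (nat \<Rightarrow> nat \<Rightarrow> real) \<Rightarrow> (nat \<times> nat) set \<Rightarrow> nat set \<Rightarrow> nat set \<Rightarrow> real" where
  "forced_payoff beta gamma M CP CQ =
     (\<Sum>(i, j) \<in> {(i, j) \<in> M. i \<in> CP}. beta i j) + (\<Sum>(i, j) \<in> {(i, j) \<in> M. j \<in> CQ}. gamma i j)"

definition minimal_forced_coalition ::
  "nat \<Rightarrow> (nat \<Rightarrow> bool) \<Rightarrow> (nat \<Rightarrow> bool) \<Rightarrow> (nat \<times> nat) set \<Rightarrow> (nat \<times> nat) set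
   \<Rightarrow> nat set \<Rightarrow> nat set \<Rightarrow> bool" where
  "minimal_forced_coalition n rp rq M M' CP CQ \<longleftrightarrow>
     CP \<subseteq> {..<n} \<and> CQ \<subseteq> {..<n} \<and> (CP \<noteq> {} \<or> CQ \<noteq> {})
     \<and> payoff_forced rp rq M CP CQ \<and> payoff_forced rp rq M' CP CQ
     \<and> (\<forall>CP' CQ'. CP' \<subseteq> CP \<and> CQ' \<subseteq> CQ \<and> (CP', CQ') \<noteq> (CP, CQ) \<and> (CP' \<noteq> {} \<or> CQ' \<noteq> {})
          \<longrightarrow> \<not> (payoff_forced rp rq M CP' CQ' \<and> payoff_forced rp rq M' CP' CQ'))"

definition coincide_on :: "(nat \<times> nat) set \<Rightarrow> (nat \<times> nat) set \<Rightarrow> nat set \<Rightarrow> nat set \<Rightarrow> bool" where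
  "coincide_on M M' CP CQ \<longleftrightarrow>
     (\<forall>i \<in> CP. \<forall>j. (i, j) \<in> M \<longleftrightarrow> (i, j) \<in> M')
     \<and> (\<forall>j \<in> CQ. \<forall>i. (i, j) \<in> M \<longleftrightarrow> (i, j) \<in> M')"

definition non_degenerate ::
  "nat \<Rightarrow> (nat \<Rightarrow> nat \<Rightarrow> real) \<Rightarrow> (nat \<Rightarrow> nat \<Rightarrow> real) \<Rightarrow> (nat \<Rightarrow> bool) \<Rightarrow> (nat \<Rightarrow> bool) \<Rightarrow> bool" where
  "non_degenerate n beta gamma rp rq \<longleftrightarrow>
     (\<forall>M M' CP CQ. perfect_matching n M \<and> perfect_matching n M'
        \<and> minimal_forced_coalition n rp rq M M' CP CQ
        \<and> forced_payoff beta gamma M CP CQ = forced_payoff beta gamma M' CP CQ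
        \<longrightarrow> coincide_on M M' CP CQ)"

end

theory Submission
  imports Defs
begin

text \<open>In a stable outcome every matched pair is paid exactly its surplus, and a rigid pair exactly
  its prescribed shares. Hence, whenever the payoff to a coalition is forced under a stable
  matching, the forced payoff is the coalition's total payoff. Given two stable matchings with the
  same payoff and a pair (p_i, q_j) of the first, take a minimal coalition containing p_i whose
  payoff is forced under both: its two forced payoffs agree, so by non-degeneracy the matchings
  coincide on it, and p_i is matched to q_j in the second matching too.\<close>

lemma perfect_matching_finite: "perfect_matching n M \<Longrightarrow> finite M"
  unfolding perfect_matching_def by (meson finite_SigmaI finite_lessThan finite_subset)

lemma perfect_matching_bij_betw_fst:
  assumes "perfect_matching n M"
  shows "bij_betw fst M {..<n}"
proof -
  have sub: "M \<subseteq> {..<n} \<times> {..<n}" and uniq: "\<forall>i<n. \<exists>!j. (i, j) \<in> M"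
    using assms unfolding perfect_matching_def by auto
  have "inj_on fst M"
    using sub uniq by (fastforce simp: inj_on_def)
  moreover have "fst ` M = {..<n}"
    using sub uniq by (force simp: image_iff)
  ultimately show ?thesis
    by (simp add: bij_betw_def)
qed

lemma perfect_matching_bij_betw_snd:
  assumes "perfect_matching n M"
  shows "bij_betw snd M {..<n}"
proof -
  have sub: "M \<subseteq> {..<n} \<times> {..<n}" and uniq: "\<forall>j<n. \<exists>!i. (i, j) \<in> M"
    using assms unfolding perfect_matching_def by auto
  have "inj_on snd M"
    using sub uniq by (fastforce simp: inj_on_def)
  moreover have "snd ` M = {..<n}"
    using sub uniq by (force simp: image_iff)
  ultimately show ?thesis
    by (simp add: bij_betw_def)
qed

lemma sum_perfect_matching_fst:
  "perfect_matching n M \<Longrightarrow> (\<Sum>p\<in>M. f (fst p)) = (\<Sum>i<n. f i)"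
  using perfect_matching_bij_betw_fst sum.reindex_bij_betw by blast

lemma sum_perfect_matching_snd:
  "perfect_matching n M \<Longrightarrow> (\<Sum>p\<in>M. f (snd p)) = (\<Sum>j<n. f j)"
  using perfect_matching_bij_betw_snd sum.reindex_bij_betw by blast

lemma stable_outcome_perfect_matching:
  "stable_outcome n beta gamma rp rq u v M \<Longrightarrow> perfect_matching n M"
  by (simp add: stable_outcome_def feasible_outcome_def)

lemma stable_outcome_matched_surplus_ge:
  assumes st: "stable_outcome n beta gamma rp rq u v M" and ij: "(i, j) \<in> M"
  shows "beta i j + gamma i j \<le> u i + v j"
proof -
  have "i < n" "j < n"
    using ij stable_outcome_perfect_matching[OF st] by (auto simp: perfect_matching_def)
  then show ?thesis
    using st ij unfolding stable_outcome_def feasible_outcome_def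
    by (cases "rp i"; cases "rq j"; fastforce)
qed

text \<open>Feasibility says the matched surpluses add up to the total payoff, so no matched pair
  can get strictly more than its surplus.\<close>

lemma stable_outcome_matched_surplus_eq:
  assumes st: "stable_outcome n beta gamma rp rq u v M" and ij: "(i, j) \<in> M"
  shows "u i + v j = beta i j + gamma i j"
proof -
  have pm: "perfect_matching n M"
    using stable_outcome_perfect_matching[OF st] .
  define slack where "slack p = u (fst p) + v (snd p) - (beta (fst p) (snd p) + gamma (fst p) (snd p))"
    for p
  have slack_nonneg: "\<forall>p\<in>M. 0 \<le> slack p"
    using stable_outcome_matched_surplus_ge[OF st] by (auto simp: slack_def)
  have "(\<Sum>p\<in>M. slack p)
      = (\<Sum>p\<in>M. u (fst p)) + (\<Sum>p\<in>M. v (snd p)) - (\<Sum>(i, j)\<in>M. beta i j + gamma i j)"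
    by (simp add: slack_def sum.distrib sum_subtractf case_prod_beta)
  also have "\<dots> = (\<Sum>i<n. u i) + (\<Sum>j<n. v j) - (\<Sum>(i, j)\<in>M. beta i j + gamma i j)"
    using sum_perfect_matching_fst[OF pm, of u] sum_perfect_matching_snd[OF pm, of v] by simp
  also have "\<dots> = 0"
    using st by (simp add: stable_outcome_def feasible_outcome_def)
  finally have "slack (i, j) = 0"
    using sum_nonneg_eq_0_iff[OF perfect_matching_finite[OF pm]] slack_nonneg ij by blast
  then show ?thesis
    by (simp add: slack_def)
qed

lemma stable_outcome_rigid_pair_shares:
  assumes st: "stable_outcome n beta gamma rp rq u v M" and ij: "(i, j) \<in> M"
    and rigid: "rp i \<or> rq j"
  shows "u i = beta i j" and "v j = gamma i j"
  using stable_outcome_matched_surplus_eq[OF st ij] rigid st ij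
  unfolding stable_outcome_def feasible_outcome_def by (cases "rp i"; fastforce)+

lemma forced_payoff_stable_outcome:
  assumes st: "stable_outcome n beta gamma rp rq u v M"
    and forced: "payoff_forced rp rq M CP CQ" and "CP \<subseteq> {..<n}" "CQ \<subseteq> {..<n}"
  shows "forced_payoff beta gamma M CP CQ = sum u CP + sum v CQ"
proof -
  have pm: "perfect_matching n M"
    using stable_outcome_perfect_matching[OF st] .
  define share_of_pair where "share_of_pair p =
      (if fst p \<in> CP then beta (fst p) (snd p) else 0) + (if snd p \<in> CQ then gamma (fst p) (snd p) else 0)"
    for p
  define payoff_of_pair where "payoff_of_pair p =
      (if fst p \<in> CP then u (fst p) else 0) + (if snd p \<in> CQ then v (snd p) else 0)" for p
  have "share_of_pair (i, j) = payoff_of_pair (i, j)" if ij: "(i, j) \<in> M" for i j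
  proof (cases "(i \<in> CP) = (j \<in> CQ)")
    case True
    then show ?thesis
      using stable_outcome_matched_surplus_eq[OF st ij]
      by (auto simp: share_of_pair_def payoff_of_pair_def)
  next
    case False
    then have "rp i \<or> rq j"
      using forced ij unfolding payoff_forced_def by auto
    then show ?thesis
      using stable_outcome_rigid_pair_shares[OF st ij]
      by (auto simp: share_of_pair_def payoff_of_pair_def)
  qed
  then have "sum share_of_pair M = sum payoff_of_pair M"
    by (auto intro: sum.cong)
  moreover have "forced_payoff beta gamma M CP CQ = sum share_of_pair M"
  proof -
    have "{(i, j) \<in> M. i \<in> CP} = {p \<in> M. fst p \<in> CP}" "{(i, j) \<in> M. j \<in> CQ} = {p \<in> M. snd p \<in> CQ}"
      by auto
    then show ?thesis
      by (simp add: forced_payoff_def share_of_pair_def sum.distrib case_prod_beta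
          sum.inter_filter[OF perfect_matching_finite[OF pm]])
  qed
  moreover have "sum payoff_of_pair M
      = (\<Sum>i<n. if i \<in> CP then u i else 0) + (\<Sum>j<n. if j \<in> CQ then v j else 0)"
    using sum_perfect_matching_fst[OF pm, of "\<lambda>i. if i \<in> CP then u i else 0"]
      sum_perfect_matching_snd[OF pm, of "\<lambda>j. if j \<in> CQ then v j else 0"]
    by (simp add: payoff_of_pair_def sum.distrib)
  moreover have "\<dots> = sum u CP + sum v CQ"
    using assms(3,4) by (simp add: sum.inter_restrict[symmetric] Int_absorb1)
  ultimately show ?thesis
    by simp
qed

lemma card_add_less_if_proper_subpair:
  assumes "finite X" "finite Y" "X' \<subseteq> X" "Y' \<subseteq> Y" "(X', Y') \<noteq> (X, Y)"
  shows "card X' + card Y' < card X + card Y"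
proof -
  have "X' \<subset> X \<or> Y' \<subset> Y"
    using assms by auto
  then have "card X' < card X \<or> card Y' < card Y"
    using assms(1,2) psubset_card_mono by meson
  moreover have "card X' \<le> card X" "card Y' \<le> card Y"
    using assms by (simp_all add: card_mono)
  ultimately show ?thesis
    by linarith
qed

lemma card_add_Diff_less:
  assumes "finite X" "finite Y" "X' \<subseteq> X" "Y' \<subseteq> Y" "X' \<noteq> {} \<or> Y' \<noteq> {}"
  shows "card (X - X') + card (Y - Y') < card X + card Y"
proof -
  have "card X' \<le> card X" "card Y' \<le> card Y"
    using assms by (simp_all add: card_mono)
  moreover have "card X' > 0 \<or> card Y' > 0"
    using assms by (meson card_gt_0_iff finite_subset)
  moreover have "card (X - X') = card X - card X'" "card (Y - Y') = card Y - card Y'"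
    using assms by (simp_all add: card_Diff_subset finite_subset)
  ultimately show ?thesis
    by linarith
qed

lemma payoff_forced_Diff:
  "payoff_forced rp rq M X Y \<Longrightarrow> payoff_forced rp rq M X' Y' \<Longrightarrow> X' \<subseteq> X \<Longrightarrow> Y' \<subseteq> Y
    \<Longrightarrow> payoff_forced rp rq M (X - X') (Y - Y')"
  unfolding payoff_forced_def by blast

text \<open>Among the coalitions containing p_i whose payoff is forced under both matchings, one of
  least size is minimal: a forced proper subcoalition would either contain p_i itself or leave a
  forced remainder containing p_i, and both are smaller.\<close>

lemma obtain_minimal_forced_coalition:
  assumes "M \<subseteq> {..<n} \<times> {..<n}" "M' \<subseteq> {..<n} \<times> {..<n}" "i < n"
  obtains CP CQ where "i \<in> CP" "minimal_forced_coalition n rp rq M M' CP CQ"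
proof -
  define candidate where "candidate c \<longleftrightarrow> fst c \<subseteq> {..<n} \<and> snd c \<subseteq> {..<n} \<and> i \<in> fst c
      \<and> payoff_forced rp rq M (fst c) (snd c) \<and> payoff_forced rp rq M' (fst c) (snd c)"
    for c :: "nat set \<times> nat set"
  have "candidate ({..<n}, {..<n})"
    using assms unfolding candidate_def payoff_forced_def by auto
  then obtain c where "candidate c"
    and least_c: "\<And>d. candidate d \<Longrightarrow> card (fst c) + card (snd c) \<le> card (fst d) + card (snd d)"
    using ex_has_least_nat[where P = candidate and m = "\<lambda>c. card (fst c) + card (snd c)"] by blast
  obtain X Y where "c = (X, Y)"
    by force
  then have XY: "candidate (X, Y)"
    and least: "\<And>d. candidate d \<Longrightarrow> card X + card Y \<le> card (fst d) + card (snd d)"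
    using \<open>candidate c\<close> least_c by auto
  have fin: "finite X" "finite Y"
    using XY finite_subset unfolding candidate_def by auto
  have "minimal_forced_coalition n rp rq M M' X Y"
    unfolding minimal_forced_coalition_def
  proof (intro conjI allI impI notI)
    show "X \<subseteq> {..<n}" "Y \<subseteq> {..<n}" "X \<noteq> {} \<or> Y \<noteq> {}"
      "payoff_forced rp rq M X Y" "payoff_forced rp rq M' X Y"
      using XY unfolding candidate_def by auto
  next
    fix X' Y'
    assume sub: "X' \<subseteq> X \<and> Y' \<subseteq> Y \<and> (X', Y') \<noteq> (X, Y) \<and> (X' \<noteq> {} \<or> Y' \<noteq> {})"
      and forced: "payoff_forced rp rq M X' Y' \<and> payoff_forced rp rq M' X' Y'"
    show False
    proof (cases "i \<in> X'")
      case True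
      then have "candidate (X', Y')"
        using XY sub forced unfolding candidate_def by auto
      then have "card X + card Y \<le> card X' + card Y'"
        using least by fastforce
      moreover have "card X' + card Y' < card X + card Y"
        using card_add_less_if_proper_subpair[OF fin] sub by blast
      ultimately show False
        by linarith
    next
      case False
      then have "candidate (X - X', Y - Y')"
        using XY sub forced payoff_forced_Diff unfolding candidate_def by auto
      then have "card X + card Y \<le> card (X - X') + card (Y - Y')"
        using least by fastforce
      moreover have "card (X - X') + card (Y - Y') < card X + card Y"
        using card_add_Diff_less[OF fin] sub by blast
      ultimately show False
        by linarith
    qed
  qed
  moreover have "i \<in> X"
    using XY by (simp add: candidate_def)
  ultimately show thesis
    using that by blast
qed

lemma stable_outcomes_same_payoff_subset:
  assumes nd: "non_degenerate n beta gamma rp rq"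
    and st: "stable_outcome n beta gamma rp rq u v M"
    and st': "stable_outcome n beta gamma rp rq u v M'"
  shows "M \<subseteq> M'"
proof
  fix p assume "p \<in> M"
  then obtain i j where p: "p = (i, j)" and ij: "(i, j) \<in> M"
    by (cases p) auto
  have pm: "perfect_matching n M" and pm': "perfect_matching n M'"
    using st st' by (simp_all add: stable_outcome_perfect_matching)
  then have sub: "M \<subseteq> {..<n} \<times> {..<n}" "M' \<subseteq> {..<n} \<times> {..<n}"
    by (simp_all add: perfect_matching_def)
  have "i < n"
    using sub ij by auto
  then obtain CP CQ where "i \<in> CP" and minimal: "minimal_forced_coalition n rp rq M M' CP CQ"
    by (rule obtain_minimal_forced_coalition[OF sub])
  then have "CP \<subseteq> {..<n}" "CQ \<subseteq> {..<n}"
    and "payoff_forced rp rq M CP CQ" "payoff_forced rp rq M' CP CQ"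
    by (simp_all add: minimal_forced_coalition_def)
  then have "forced_payoff beta gamma M CP CQ = forced_payoff beta gamma M' CP CQ"
    using forced_payoff_stable_outcome[OF st] forced_payoff_stable_outcome[OF st'] by simp
  then have "coincide_on M M' CP CQ"
    using nd pm pm' minimal unfolding non_degenerate_def by blast
  then show "p \<in> M'"
    using \<open>i \<in> CP\<close> ij p unfolding coincide_on_def by blast
qed

theorem proposition4:
  fixes n :: nat and beta gamma :: "nat \<Rightarrow> nat \<Rightarrow> real"
    and rp rq :: "nat \<Rightarrow> bool" and u v :: "nat \<Rightarrow> real"
  assumes "rifle_game n beta gamma"
    and "non_degenerate n beta gamma rp rq"
    and "stable_payoff n beta gamma rp rq u v"
  shows "\<exists>!M. stable_outcome n beta gamma rp rq u v M"
proof -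
  obtain M where M: "stable_outcome n beta gamma rp rq u v M"
    using assms(3) unfolding stable_payoff_def by blast
  have "M' = M" if M': "stable_outcome n beta gamma rp rq u v M'" for M'
    using stable_outcomes_same_payoff_subset[OF assms(2) M' M]
      stable_outcomes_same_payoff_subset[OF assms(2) M M'] by (rule subset_antisym)
  then show ?thesis
    using M by blast
qed

end
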